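(* Let $\alpha=(\alpha_n)_{n\in\mathbb{Z}}\in(k^\times)^{\mathbb{Z}}$, $\beta=(\beta_n)_{n\in\mathbb{Z}}\in k^{\mathbb{Z}}$, $r\in\mathbb{Z}$ and $s>1$. Then $$(\phi_\alpha\theta_r)\,\phi^{(s)}_\beta\,(\phi_\alpha\theta_r)^{-1}=\phi^{(s)}_{\alpha^{-1}\alpha^{-1}[1]\cdots\alpha^{-1}[s-1]\,\beta[-r]}.$$ In particular, $\phi_\alpha\phi^{(s)}_\beta\phi_\alpha^{-1}=\phi^{(s)}_{\alpha^{-1}\alpha^{-1}[1]\cdots\alpha^{-1}[s-1]\,\beta}$.
   Context: Let $k$ be a field and $0\neq q\in k$ not a root of unity. $H=k_q[x,x^{-1},y]$ is the $k$-algebra generated by $x,x^{-1},y$ with $xx^{-1}=x^{-1}x=1$, $yx=qxy$; $\{x^ny^m:n\in\mathbb{Z},m\in\mathbb{N}\}$ is a $k$-basis. For sequences in $k^{\mathbb{Z}}$ operations are componentwise; $\alpha^{-1}=(\alpha_n^{-1})_n$ and $\gamma[r]$ denotes the sequence with $\gamma[r]_n=\gamma_{n+r}$. $\theta_r$ is the linear map $x^ny^m\mapsto x^{n+r}y^m$; $\phi_\alpha$ is the linear map with $\phi_\alpha(x^n)=x^n$, $\phi_\alpha(x^ny^m)=(\prod_{i=0}^{m-1}\alpha_{n+i})x^ny^m$ for $m\ge1$. Let $(j)_q=1+q+\dots+q^{j-1}$, $(j)!_q=(j)_q\cdots(1)_q$, $\binom{m}{i}_q=\frac{(m)!_q}{(i)!_q(m-i)!_q}$,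 $\binom{m}{s}_{q,i}=\prod_{j=0}^{i-1}\binom{m-js}{s}_q$, and for $\beta\in k^{\mathbb{Z}}$, $\beta_{n,s;0}=1$, $\beta_{n,s;i}=\prod_{j=0}^{i-1}\beta_{n+js}$. For $s\ge2$, $\phi^{(s)}_\beta$ is the linear map $H\to H$ with $\phi^{(s)}_\beta(x^ny^m)=x^ny^m$ for $0\le m<s$ and, for $m\geq s$, $\phi^{(s)}_\beta(x^ny^m)=x^ny^m+\sum_{1\le i\le\lfloor m/s\rfloor}\binom{m}{s}_{q,i}\big(\beta_{n,s;i}x^{n+is}-\beta_{n,s;i-1}\beta_{n+m-s}x^{n+is-s}\big)y^{m-is}$. *)

theory Defs
  imports Main "HOL-Library.Poly_Mapping"
begin

text \<open>Elements of H = k_q[x,x^-1,y] are represented by their coefficient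
 vectors w.r.t. the basis x^n y^m, i.e. finitely supported maps (n,m) => coefficient.\<close>

type_synonym 'a qtorus = "(int \<times> nat) \<Rightarrow>\<^sub>0 'a"

definition xy :: "int \<Rightarrow> nat \<Rightarrow> 'a::field qtorus" where
  "xy n m = Poly_Mapping.single (n, m) 1"

definition scal :: "'a::field \<Rightarrow> 'a qtorus \<Rightarrow> 'a qtorus" where
  "scal c f = Poly_Mapping.map (\<lambda>d. c * d) f"

definition lin_ext :: "(int \<Rightarrow> nat \<Rightarrow> 'a::field qtorus) \<Rightarrow> 'a qtorus \<Rightarrow> 'a qtorus" where
  "lin_ext b f = (\<Sum>k\<in>Poly_Mapping.keys f. scal (Poly_Mapping.lookup f k) (b (fst k) (snd k)))"

definition qint :: "'a::field \<Rightarrow> nat \<Rightarrow> 'a" where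
  "qint q j = (\<Sum>i<j. q ^ i)"

definition qfact :: "'a::field \<Rightarrow> nat \<Rightarrow> 'a" where
  "qfact q m = (\<Prod>j\<in>{1..m}. qint q j)"

definition qbinom :: "'a::field \<Rightarrow> nat \<Rightarrow> nat \<Rightarrow> 'a" where
  "qbinom q m i = qfact q m / (qfact q i * qfact q (m - i))"

definition qbinom_i :: "'a::field \<Rightarrow> nat \<Rightarrow> nat \<Rightarrow> nat \<Rightarrow> 'a" where
  "qbinom_i q m s i = (\<Prod>j<i. qbinom q (m - j * s) s)"

definition bprod :: "(int \<Rightarrow> 'a::field) \<Rightarrow> int \<Rightarrow> nat \<Rightarrow> nat \<Rightarrow> 'a" where
  "bprod \<beta> n s i = (\<Prod>j<i. \<beta> (n + int j * int s))"

definition theta :: "int \<Rightarrow> 'a::field qtorus \<Rightarrow> 'a qtorus" where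
  "theta r = lin_ext (\<lambda>n m. xy (n + r) m)"

definition phi :: "(int \<Rightarrow> 'a::field) \<Rightarrow> 'a qtorus \<Rightarrow> 'a qtorus" where
  "phi \<alpha> = lin_ext (\<lambda>n m. scal (\<Prod>i<m. \<alpha> (n + int i)) (xy n m))"

definition phi_s :: "'a::field \<Rightarrow> nat \<Rightarrow> (int \<Rightarrow> 'a) \<Rightarrow> 'a qtorus \<Rightarrow> 'a qtorus" where
  "phi_s q s \<beta> = lin_ext (\<lambda>n m.
     if m < s then xy n m
     else xy n m + (\<Sum>i\<in>{1..m div s}. scal (qbinom_i q m s i)
        (scal (bprod \<beta> n s i) (xy (n + int i * int s) (m - i * s))
         - scal (bprod \<beta> n s (i - 1) * \<beta> (n + int m - int s))
                (xy (n + int i * int s - int s) (m - i * s)))))"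

end

theory Submission imports Defs begin

text \<open>The map T = phi_alpha theta_r is diagonal in the monomial basis: it sends x^n y^m to
  (alpha_(n+r) ... alpha_(n+r+m-1)) x^(n+r) y^m. It therefore suffices to verify the intertwining
  relation T phi^(s)_beta = phi^(s)_beta' T on basis elements, where it amounts to cutting the weight
  product of length m into blocks of length s, each block being absorbed by one factor of beta'.
  As T is surjective, the conjugation formula follows.\<close>

lemma lookup_scal [simp]: "Poly_Mapping.lookup (scal c f) k = c * Poly_Mapping.lookup f k"
  unfolding scal_def by (simp add: Poly_Mapping.map.rep_eq when_def)

lemma scal_add: "scal c (f + g) = scal c f + scal c g"
  by (rule poly_mapping_eqI) (simp add: lookup_add algebra_simps)

lemma scal_add_left: "scal (a + b) f = scal a f + scal b f"
  by (rule poly_mapping_eqI) (simp add: lookup_add algebra_simps)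

lemma scal_scal [simp]: "scal a (scal b f) = scal (a * b) f"
  by (rule poly_mapping_eqI) simp

lemma scal_zero_left [simp]: "scal 0 f = 0"
  by (rule poly_mapping_eqI) simp

lemma scal_one [simp]: "scal 1 f = f"
  by (rule poly_mapping_eqI) simp

lemma scal_sum: "scal c (sum g S) = (\<Sum>x\<in>S. scal c (g x))"
  by (rule poly_mapping_eqI) (simp add: lookup_sum sum_distrib_left)

lemma keys_scal: "Poly_Mapping.keys (scal c f) \<subseteq> Poly_Mapping.keys f"
  by (auto simp: in_keys_iff)

lemma lin_ext_eq_sum_superset:
  assumes "finite S" "Poly_Mapping.keys f \<subseteq> S"
  shows "lin_ext b f = (\<Sum>k\<in>S. scal (Poly_Mapping.lookup f k) (b (fst k) (snd k)))"
  unfolding lin_ext_def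
  by (rule sum.mono_neutral_left) (use assms in \<open>auto simp: in_keys_iff\<close>)

lemma lin_ext_add: "lin_ext b (f + g) = lin_ext b f + lin_ext b g"
proof -
  let ?S = "Poly_Mapping.keys f \<union> Poly_Mapping.keys g"
  let ?t = "\<lambda>h k. scal (Poly_Mapping.lookup h k) (b (fst k) (snd k))"
  have "lin_ext b (f + g) = (\<Sum>k\<in>?S. ?t (f + g) k)"
    by (rule lin_ext_eq_sum_superset) (auto dest: set_mp[OF keys_add])
  also have "\<dots> = (\<Sum>k\<in>?S. ?t f k) + (\<Sum>k\<in>?S. ?t g k)"
    by (simp add: lookup_add scal_add_left sum.distrib)
  also have "\<dots> = lin_ext b f + lin_ext b g"
    by (simp add: lin_ext_eq_sum_superset[symmetric])
  finally show ?thesis .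
qed

lemma lin_ext_zero [simp]: "lin_ext b 0 = 0"
  by (simp add: lin_ext_def)

lemma lin_ext_scal: "lin_ext b (scal c f) = scal c (lin_ext b f)"
proof -
  have "lin_ext b (scal c f)
      = (\<Sum>k\<in>Poly_Mapping.keys f. scal (Poly_Mapping.lookup (scal c f) k) (b (fst k) (snd k)))"
    by (rule lin_ext_eq_sum_superset) (auto simp: keys_scal)
  then show ?thesis by (simp add: lin_ext_def scal_sum)
qed

lemma lin_ext_diff: "lin_ext b (f - g) = lin_ext b f - lin_ext b g"
  using lin_ext_add[of b "f - g" g] by (simp add: algebra_simps)

lemma lin_ext_sum: "lin_ext b (sum g S) = (\<Sum>x\<in>S. lin_ext b (g x))"
  by (induction S rule: infinite_finite_induct) (auto simp: lin_ext_add)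

lemma lin_ext_xy [simp]: "lin_ext b (xy n m) = b n m"
  by (simp add: lin_ext_def xy_def)

lemma lin_ext_comp: "lin_ext c \<circ> lin_ext b = lin_ext (\<lambda>n m. lin_ext c (b n m))"
proof
  fix f
  show "(lin_ext c \<circ> lin_ext b) f = lin_ext (\<lambda>n m. lin_ext c (b n m)) f"
    by (subst (1) lin_ext_def) (simp add: lin_ext_sum lin_ext_scal lin_ext_def[of _ f])
qed

lemma lin_ext_xy_eq_id: "lin_ext xy = id"
proof
  fix f :: "'a::field qtorus"
  show "lin_ext xy f = id f"
  proof (rule poly_mapping_eqI)
    fix j
    have "Poly_Mapping.lookup (lin_ext xy f) j
        = (\<Sum>k\<in>Poly_Mapping.keys f. Poly_Mapping.lookup f k * (if k = j then 1 else 0))"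
      by (simp add: lin_ext_def lookup_sum xy_def lookup_single when_def)
    also have "\<dots> = Poly_Mapping.lookup f j"
      by (simp add: if_distrib sum.delta in_keys_iff cong: if_cong)
    finally show "Poly_Mapping.lookup (lin_ext xy f) j = Poly_Mapping.lookup (id f) j"
      by simp
  qed
qed

lemma conj_eq_if_intertwines:
  assumes "surj T" and "T \<circ> A = B \<circ> T"
  shows "T \<circ> A \<circ> inv T = B"
  using assms by (simp add: surj_iff comp_assoc)

definition seg_prod :: "(int \<Rightarrow> 'a::field) \<Rightarrow> int \<Rightarrow> nat \<Rightarrow> 'a" where
  "seg_prod \<alpha> n m = (\<Prod>i<m. \<alpha> (n + int i))"

lemma seg_prod_nonzero: "(\<And>n. \<alpha> n \<noteq> 0) \<Longrightarrow> seg_prod \<alpha> n m \<noteq> 0"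
  by (simp add: seg_prod_def)

lemma seg_prod_add: "seg_prod \<alpha> n (a + b) = seg_prod \<alpha> n a * seg_prod \<alpha> (n + int a) b"
  by (induction b) (simp_all add: seg_prod_def algebra_simps)

lemma seg_prod_blocks: "seg_prod \<alpha> n (i * s) = (\<Prod>j<i. seg_prod \<alpha> (n + int j * int s) s)"
proof (induction i)
  case (Suc i)
  have "seg_prod \<alpha> n (Suc i * s) = seg_prod \<alpha> n (i * s) * seg_prod \<alpha> (n + int i * int s) s"
    using seg_prod_add[of \<alpha> n "i * s" s] by (simp add: add.commute)
  with Suc show ?case by simp
qed (simp add: seg_prod_def)

lemma bprod_reweight:
  "bprod (\<lambda>k. inverse (seg_prod \<alpha> k s) * \<gamma> k) n s i = inverse (seg_prod \<alpha> n (i * s)) * bprod \<gamma> n s i"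
  by (simp add: bprod_def seg_prod_blocks prod.distrib prod_inversef[symmetric] comp_def)

lemma seg_prod_mult_bprod_reweight:
  assumes "\<And>n. \<alpha> n \<noteq> 0" and "i * s \<le> m"
  shows "seg_prod \<alpha> n m * bprod (\<lambda>k. inverse (seg_prod \<alpha> k s) * \<gamma> k) n s i
       = bprod \<gamma> n s i * seg_prod \<alpha> (n + int i * int s) (m - i * s)"
proof -
  have "seg_prod \<alpha> n m = seg_prod \<alpha> n (i * s) * seg_prod \<alpha> (n + int i * int s) (m - i * s)"
    using seg_prod_add[of \<alpha> n "i * s" "m - i * s"] assms(2) by simp
  then show ?thesis
    by (simp add: bprod_reweight seg_prod_nonzero[OF assms(1)])
qed

lemma seg_prod_mult_bprod_reweight_last:
  fixes \<alpha> \<gamma> :: "int \<Rightarrow> 'a::field"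
  assumes "\<And>n. \<alpha> n \<noteq> 0" and "1 \<le> i" and "i * s \<le> m"
  defines "\<gamma>' \<equiv> \<lambda>k. inverse (seg_prod \<alpha> k s) * \<gamma> k"
  shows "seg_prod \<alpha> n m * (bprod \<gamma>' n s (i - 1) * \<gamma>' (n + int m - int s))
       = bprod \<gamma> n s (i - 1) * \<gamma> (n + int m - int s)
         * seg_prod \<alpha> (n + int i * int s - int s) (m - i * s)"
proof -
  have m_split: "m = (i - 1) * s + (m - i * s) + s"
    using assms(2,3) by (cases i) (auto simp: algebra_simps)
  have start: "n + int ((i - 1) * s) = n + int i * int s - int s"
    using assms(2) by (simp add: of_nat_diff algebra_simps)
  have "s \<le> m"
    using assms(2,3) by (metis dual_order.trans mult_1 mult_le_mono1)
  then have last: "n + int ((i - 1) * s + (m - i * s)) = n + int m - int s"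
    using assms(2,3) by (simp add: of_nat_diff algebra_simps)
  have "seg_prod \<alpha> n m = seg_prod \<alpha> n ((i - 1) * s)
      * seg_prod \<alpha> (n + int i * int s - int s) (m - i * s) * seg_prod \<alpha> (n + int m - int s) s"
    by (subst m_split) (simp only: seg_prod_add start last mult.assoc)
  then show ?thesis
    unfolding \<gamma>'_def bprod_reweight by (simp add: seg_prod_nonzero[OF assms(1)] field_simps)
qed

lemma phi_theta_eq:
  "phi \<alpha> \<circ> theta r = lin_ext (\<lambda>n m. scal (seg_prod \<alpha> (n + r) m) (xy (n + r) m))"
  by (simp add: phi_def theta_def lin_ext_comp seg_prod_def)

lemma surj_phi_theta:
  assumes "\<And>n. \<alpha> n \<noteq> 0"
  shows "surj (phi \<alpha> \<circ> theta r)"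
proof -
  let ?\<Psi> = "lin_ext (\<lambda>n m. scal (inverse (seg_prod \<alpha> n m)) (xy (n - r) m))"
  have "(phi \<alpha> \<circ> theta r) \<circ> ?\<Psi> = id"
    by (simp add: phi_theta_eq lin_ext_comp lin_ext_scal seg_prod_nonzero[OF assms] lin_ext_xy_eq_id)
  then show ?thesis
    by (intro surjI[of _ ?\<Psi>]) (simp add: fun_eq_iff)
qed

lemma phi_theta_phi_s_xy:
  fixes \<alpha> \<beta> :: "int \<Rightarrow> 'a::field" and r :: int and s :: nat
  assumes "\<And>n. \<alpha> n \<noteq> 0"
  defines "\<beta>' \<equiv> \<lambda>k. inverse (seg_prod \<alpha> k s) * \<beta> (k - r)"
  shows "(phi \<alpha> \<circ> theta r) (phi_s q s \<beta> (xy n m))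
       = scal (seg_prod \<alpha> (n + r) m) (phi_s q s \<beta>' (xy (n + r) m))"
proof (cases "m < s")
  case True
  then show ?thesis
    by (simp add: phi_theta_eq phi_s_def)
next
  case False
  let ?w = "seg_prod \<alpha> (n + r) m"
  have term_eq: "scal c (scal b1 X1 - scal b2 X2) = scal (?w * c) (scal b1' X1' - scal b2' X2')"
    if "?w * b1' = b1" "?w * b2' = b2" "X1 = X1'" "X2 = X2'" for c b1 b2 b1' b2' X1 X2 X1' X2'
    by (rule poly_mapping_eqI) (simp add: lookup_minus algebra_simps flip: that)
  have weights:
    "?w * bprod \<beta>' (n + r) s i = bprod \<beta> n s i * seg_prod \<alpha> (n + int i * int s + r) (m - i * s)"
    "?w * (bprod \<beta>' (n + r) s (i - 1) * \<beta>' (n + r + int m - int s))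
       = bprod \<beta> n s (i - 1) * \<beta> (n + int m - int s) * seg_prod \<alpha> (n + int i * int s - int s + r) (m - i * s)"
    if "i \<in> {1..m div s}" for i
  proof -
    have le: "i * s \<le> m"
      using that by (metis atLeastAtMost_iff div_times_less_eq_dividend dual_order.trans mult_le_mono1)
    have shift: "bprod (\<lambda>k. \<beta> (k - r)) (n + r) s j = bprod \<beta> n s j" for j
      by (simp add: bprod_def algebra_simps)
    show "?w * bprod \<beta>' (n + r) s i = bprod \<beta> n s i * seg_prod \<alpha> (n + int i * int s + r) (m - i * s)"
      using seg_prod_mult_bprod_reweight[where \<alpha> = \<alpha>, OF assms(1) le,
          where n = "n + r" and \<gamma> = "\<lambda>k. \<beta> (k - r)"]
      unfolding \<beta>'_def shift by (simp add: add_ac)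
    show "?w * (bprod \<beta>' (n + r) s (i - 1) * \<beta>' (n + r + int m - int s))
       = bprod \<beta> n s (i - 1) * \<beta> (n + int m - int s) * seg_prod \<alpha> (n + int i * int s - int s + r) (m - i * s)"
      using seg_prod_mult_bprod_reweight_last[where \<alpha> = \<alpha>, OF assms(1) _ le,
          where n = "n + r" and \<gamma> = "\<lambda>k. \<beta> (k - r)"] that
      unfolding \<beta>'_def shift by (simp add: algebra_simps)
  qed
  show ?thesis
    using False
    by (simp add: phi_s_def phi_theta_eq lin_ext_add lin_ext_sum lin_ext_diff lin_ext_scal
          scal_add scal_sum,
        intro sum.cong refl term_eq)
      (simp_all add: weights[simplified], simp_all add: algebra_simps)
qed

lemma phi_theta_phi_s_intertwine:
  fixes \<alpha> \<beta> :: "int \<Rightarrow> 'a::field"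
  assumes "\<And>n. \<alpha> n \<noteq> 0"
  shows "(phi \<alpha> \<circ> theta r) \<circ> phi_s q s \<beta>
       = phi_s q s (\<lambda>k. inverse (seg_prod \<alpha> k s) * \<beta> (k - r)) \<circ> (phi \<alpha> \<circ> theta r)"
proof -
  let ?T = "phi \<alpha> \<circ> theta r" and ?\<beta>' = "\<lambda>k. inverse (seg_prod \<alpha> k s) * \<beta> (k - r)"
  have "?T \<circ> phi_s q s \<beta> = lin_ext (\<lambda>n m. ?T (phi_s q s \<beta> (xy n m)))"
    unfolding phi_s_def phi_theta_eq lin_ext_comp by simp
  moreover have "phi_s q s ?\<beta>' \<circ> ?T
      = lin_ext (\<lambda>n m. scal (seg_prod \<alpha> (n + r) m) (phi_s q s ?\<beta>' (xy (n + r) m)))"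
    unfolding phi_s_def phi_theta_eq lin_ext_comp by (simp add: lin_ext_scal)
  ultimately show ?thesis
    by (simp only: phi_theta_phi_s_xy[OF assms])
qed

theorem lemma3p16:
  fixes q :: "'a::field" and \<alpha> \<beta> :: "int \<Rightarrow> 'a" and r :: int and s :: nat
  assumes q_nz: "q \<noteq> 0"
    and q_not_root: "\<And>n::nat. n > 0 \<Longrightarrow> q ^ n \<noteq> 1"
    and \<alpha>_units: "\<And>n. \<alpha> n \<noteq> 0"
    and s_gt: "s > 1"
  shows "(phi \<alpha> \<circ> theta r) \<circ> phi_s q s \<beta> \<circ> inv (phi \<alpha> \<circ> theta r)
           = phi_s q s (\<lambda>n. (\<Prod>j<s. inverse (\<alpha> (n + int j))) * \<beta> (n - r))
       \<and> phi \<alpha> \<circ> phi_s q s \<beta> \<circ> inv (phi \<alpha>)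
           = phi_s q s (\<lambda>n. (\<Prod>j<s. inverse (\<alpha> (n + int j))) * \<beta> n)"
proof -
  have weight_eq: "(\<Prod>j<s. inverse (\<alpha> (n + int j))) = inverse (seg_prod \<alpha> n s)" for n
    by (simp add: seg_prod_def prod_inversef[symmetric] comp_def)
  have conj: "(phi \<alpha> \<circ> theta r') \<circ> phi_s q s \<beta> \<circ> inv (phi \<alpha> \<circ> theta r')
      = phi_s q s (\<lambda>n. (\<Prod>j<s. inverse (\<alpha> (n + int j))) * \<beta> (n - r'))" for r'
    unfolding weight_eq
    by (intro conj_eq_if_intertwines surj_phi_theta phi_theta_phi_s_intertwine \<alpha>_units)
  have "theta 0 = (id :: 'a qtorus \<Rightarrow> 'a qtorus)"
    by (simp add: theta_def lin_ext_xy_eq_id)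
  then show ?thesis
    using conj[of r] conj[of 0] by simp
qed

end
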